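(* Let $G=(V,E)$ be a graph and let $\hat{\mathcal{C}}$ be one of the sets $\widehat{\mathrm{TH}}(G):=\{\hat X\in\mathbb{S}^{\{0\}\cup V}_+ : \hat X_{00}=1,\ \hat X_{ii}=\hat X_{0i}\ \forall i\in V,\ \hat X_{ij}=0\ \forall ij\in E\}$, $\widehat{\mathrm{TH}}'(G):=\{\hat X\in\widehat{\mathrm{TH}}(G) : \hat X_{ij}\ge 0\ \forall ij\in\binom{V}{2}\setminus E\}$, or $\widehat{\mathrm{TH}}^+(G):=\{\hat X\in\mathbb{S}^{\{0\}\cup V}_+ : \hat X_{00}=1,\ \hat X_{ii}=\hat X_{0i}\ \forall i\in V,\ \hat X_{ij}\le 0\ \forall ij\in E\}$. Then a point $\hat X$ of $\hat{\mathcal{C}}$ is a vertex of $\hat{\mathcal{C}}$ if and only if $\operatorname{rank}(\hat X)=1$. Thus the vertices of $\hat{\mathcal{C}}$ are precisely the matrices $(1\oplus\chi^S)(1\oplus\chi^S)^{\mathsf T}$ where $S\subseteq V$ is a stable set of $G$.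
   Context: $0$ is a new index not in $V$; $\mathbb{S}^{W}_+$ denotes real symmetric positive semidefinite matrices indexed by $W$, with trace inner product. $\chi^S\in\{0,1\}^V$ is the incidence vector of $S$, and $1\oplus\chi^S\in\mathbb{R}^{\{0\}\cup V}$ has $0$-entry $1$. For a convex set $\mathcal{C}$ in a finite-dimensional space $\mathbb{E}$ and $\bar x\in\mathcal{C}$, the normal cone is $N_{\mathcal{C}}(\bar x):=\{c : \langle c,x\rangle\le\langle c,\bar x\rangle\ \forall x\in\mathcal{C}\}$; $\bar x$ is a vertex if $\dim N_{\mathcal{C}}(\bar x)=\dim\mathbb{E}$. *)

theory Defs
  imports "HOL-Analysis.Analysis"
begin

text \<open>Matrices indexed by \<open>{0} \<union> V\<close>: the index type is \<open>'v option\<close>,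
  where \<open>None\<close> plays the role of the new index 0 and \<open>Some i\<close> the vertex \<open>i \<in> V\<close>
  (V = UNIV :: 'v set, a finite type). The inner product on \<open>real^'w^'w\<close> is
  \<open>A \<bullet> B = \<Sum>i j. A_ij B_ij = trace(A^T B)\<close>.\<close>

definition sym_mats :: "(real^'w^'w) set" where
  "sym_mats = {A. transpose A = A}"

definition psd :: "real^'w^'w \<Rightarrow> bool" where
  "psd A \<longleftrightarrow> transpose A = A \<and> (\<forall>x. 0 \<le> x \<bullet> (A *v x))"

definition TH_hat :: "('v::finite \<times> 'v) set \<Rightarrow> (real^('v option)^('v option)) set" where
  "TH_hat E = {X. psd X \<and> X $ None $ None = 1 \<and>
      (\<forall>i. X $ Some i $ Some i = X $ None $ Some i) \<and>
      (\<forall>i j. (i, j) \<in> E \<longrightarrow> X $ Some i $ Some j = 0)}"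

definition TH_hat' :: "('v::finite \<times> 'v) set \<Rightarrow> (real^('v option)^('v option)) set" where
  "TH_hat' E = {X \<in> TH_hat E.
      \<forall>i j. i \<noteq> j \<and> (i, j) \<notin> E \<longrightarrow> 0 \<le> X $ Some i $ Some j}"

definition TH_hat_plus :: "('v::finite \<times> 'v) set \<Rightarrow> (real^('v option)^('v option)) set" where
  "TH_hat_plus E = {X. psd X \<and> X $ None $ None = 1 \<and>
      (\<forall>i. X $ Some i $ Some i = X $ None $ Some i) \<and>
      (\<forall>i j. (i, j) \<in> E \<longrightarrow> X $ Some i $ Some j \<le> 0)}"

definition normal_cone :: "(real^'w^'w) set \<Rightarrow> real^'w^'w \<Rightarrow> (real^'w^'w) set" where
  "normal_cone C x = {c \<in> sym_mats. \<forall>y\<in>C. c \<bullet> y \<le> c \<bullet> x}"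

definition is_vertex :: "(real^'w^'w) set \<Rightarrow> real^'w^'w \<Rightarrow> bool" where
  "is_vertex C x \<longleftrightarrow> x \<in> C \<and> dim (normal_cone C x) = dim (sym_mats :: (real^'w^'w) set)"

definition one_chi :: "'v::finite set \<Rightarrow> real^('v option)" where
  "one_chi S = (\<chi> i. case i of None \<Rightarrow> 1 | Some v \<Rightarrow> (if v \<in> S then 1 else 0))"

definition outer :: "real^'w \<Rightarrow> real^'w^'w" where
  "outer u = (\<chi> i j. u $ i * u $ j)"

definition stable_set :: "('v \<times> 'v) set \<Rightarrow> 'v set \<Rightarrow> bool" where
  "stable_set E S \<longleftrightarrow> (\<forall>i\<in>S. \<forall>j\<in>S. (i, j) \<notin> E)"

end

theory Submission
  imports Defs
begin

text \<open>Every matrix X in the three sets is the Gram matrix of vectors v_0, v_i (i \<in> V) with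
  |v_0| = 1 and |v_i|^2 = <v_0, v_i>, and its Schur complement X_ij - X_0i X_0j is the Gram
  matrix of the components of the v_i orthogonal to v_0. If the Schur complement vanishes, then
  X = (1 \<oplus> \<chi>^S)(1 \<oplus> \<chi>^S)^T for a stable set S, and the normal cone at X contains E_00,
  2 E_ii - E_0i - E_i0 and -w w^T for every w orthogonal to 1 \<oplus> \<chi>^S; these span all symmetric
  matrices. Otherwise some v_k has a nonzero component u orthogonal to v_0. Rotating v_0 towards u
  and rescaling each v_i by a positive factor so that |v_i|^2 = <v_0, v_i> holds again gives a
  smooth curve through X inside the set, since positive rescaling preserves the sign of every
  entry X_ij. Every normal vector at X is orthogonal to the nonzero velocity of this curve, so the
  normal cone is not full-dimensional, while X has rank at least 2.\<close>

section \<open>Matrices, quadratic forms and rank\<close>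

lemma inner_matrix: "(A::real^'w^'w) \<bullet> B = (\<Sum>a\<in>UNIV. \<Sum>b\<in>UNIV. A$a$b * B$a$b)"
  by (simp add: inner_vec_def)

lemma inner_matrix_vector_mult:
  "(z::real^'w) \<bullet> ((X::real^'w^'w) *v y) = (\<Sum>a\<in>UNIV. \<Sum>b\<in>UNIV. z$a * X$a$b * y$b)"
  by (simp add: inner_vec_def matrix_vector_mult_def sum_distrib_left mult.assoc)

lemma inner_axis_matrix_vector_mult_axis: "axis a 1 \<bullet> (X *v axis b 1) = X$a$b"
  by (simp add: inner_axis' matrix_vector_mult_basis column_def)

lemma transpose_eq_selfD: "transpose X = X \<Longrightarrow> X$a$b = X$b$a"
  by (metis transpose_def vec_lambda_beta)

lemma inner_matrix_vector_mult_commute: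
  fixes X :: "real^'w^'w"
  assumes "transpose X = X"
  shows "z \<bullet> (X *v y) = y \<bullet> (X *v z)"
  by (metis assms dot_lmul_matrix inner_commute transpose_matrix_vector)

lemma psd_Cauchy_Schwarz:
  fixes X :: "real^'w^'w"
  assumes "psd X"
  shows "(z \<bullet> (X *v y))\<^sup>2 \<le> (z \<bullet> (X *v z)) * (y \<bullet> (X *v y))"
proof -
  define b where "b = z \<bullet> (X *v y)"
  define p where "p = z \<bullet> (X *v z)"
  define q where "q = y \<bullet> (X *v y)"
  have yz: "y \<bullet> (X *v z) = b"
    using assms inner_matrix_vector_mult_commute unfolding b_def psd_def by metis
  have quad: "0 \<le> p + 2*t*b + t\<^sup>2 * q" for t
  proof -
    have "0 \<le> (z + t *\<^sub>R y) \<bullet> (X *v (z + t *\<^sub>R y))"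
      using assms by (simp add: psd_def)
    also have "\<dots> = p + 2*t*b + t\<^sup>2 * q"
      by (simp add: algebra_simps inner_add_left inner_add_right p_def q_def
          b_def[symmetric] yz power2_eq_square)
    finally show ?thesis .
  qed
  have "b\<^sup>2 \<le> p * q"
  proof (cases "q = 0")
    case True
    have "b = 0"
    proof (rule ccontr)
      assume "b \<noteq> 0"
      with True quad[of "-(p+1)/(2*b)"] show False by (simp add: field_simps)
    qed
    then show ?thesis using True by simp
  next
    case False
    moreover have "q \<ge> 0" using assms by (simp add: psd_def q_def)
    ultimately have "q > 0" by simp
    moreover have "0 \<le> p + 2*(-b/q)*b + (-b/q)\<^sup>2 * q" by (rule quad)
    ultimately show ?thesis by (simp add: field_simps power2_eq_square)
  qed
  then show ?thesis by (simp add: b_def p_def q_def)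
qed

definition diag_congruence :: "('w \<Rightarrow> real) \<Rightarrow> real^'w^'w \<Rightarrow> real^'w^'w" where
  "diag_congruence d A = (\<chi> a b. d a * A$a$b * d b)"

lemma psd_diag_congruence:
  assumes "psd A"
  shows "psd (diag_congruence d A)"
proof -
  have "z \<bullet> (diag_congruence d A *v z) = (\<chi> a. d a * z$a) \<bullet> (A *v (\<chi> a. d a * z$a))" for z
    by (simp add: inner_matrix_vector_mult diag_congruence_def mult_ac)
  moreover have "transpose (diag_congruence d A) = diag_congruence d A"
    using transpose_eq_selfD assms
    by (auto simp: psd_def vec_eq_iff transpose_def diag_congruence_def mult_ac)
  ultimately show ?thesis using assms by (simp add: psd_def)
qed

lemma outer_quadratic_form: "z \<bullet> (outer u *v z) = (u \<bullet> z)\<^sup>2"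
  unfolding inner_matrix_vector_mult
  by (simp add: outer_def inner_vec_def power2_eq_square sum_product mult_ac)

lemma psd_outer: "psd (outer u)"
proof -
  have "transpose (outer u) = outer u"
    by (simp add: vec_eq_iff transpose_def outer_def mult.commute)
  then show ?thesis by (simp add: psd_def outer_quadratic_form)
qed

lemma inner_outer: "outer w \<bullet> Y = w \<bullet> (Y *v w)"
  unfolding inner_matrix_vector_mult inner_matrix by (simp add: outer_def mult_ac)

lemma rank_outer:
  fixes u :: "real^'w"
  assumes "u $ a \<noteq> 0"
  shows "rank (outer u) = 1"
proof -
  have "rows (outer u) \<subseteq> span {u}"
    by (auto simp: rows_def row_def outer_def vec_eq_iff span_singleton intro!: exI)
  then have "rank (outer u) \<le> 1"
    using dim_le_card[of "rows (outer u)" "{u}"] by (simp add: row_rank_def)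
  moreover have "rank (outer u) \<noteq> 0"
    using assms by (auto simp: rank_eq_0 outer_def vec_eq_iff)
  ultimately show ?thesis by simp
qed

lemma two_le_rank:
  fixes X :: "real^'w^'w"
  assumes "X $ a \<noteq> 0" and "X $ b \<notin> span {X $ a}"
  shows "2 \<le> rank X"
proof -
  have "independent {X $ a}"
    using assms(1) independent_insertI[of "X $ a" "{}"] by simp
  then have "independent {X $ b, X $ a}"
    by (rule independent_insertI[OF assms(2)])
  moreover have "{X $ b, X $ a} \<subseteq> rows X"
    by (auto simp: rows_def row_def)
  ultimately have "card {X $ b, X $ a} \<le> rank X"
    by (simp add: row_rank_def independent_card_le_dim)
  moreover have "X $ b \<noteq> X $ a"
    using assms(2) span_base[of "X $ a" "{X $ a}"] by auto
  ultimately show ?thesis by simp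
qed

definition sym_outer :: "real^'w \<Rightarrow> real^'w \<Rightarrow> real^'w^'w" where
  "sym_outer x y = (\<chi> a b. x$a * y$b + y$a * x$b)"

lemma sym_outer_commute: "sym_outer x y = sym_outer y x"
  by (simp add: sym_outer_def vec_eq_iff add.commute)

lemma sym_outer_eq_outer: "sym_outer x y = outer (x + y) - outer x - outer y"
  by (simp add: sym_outer_def outer_def vec_eq_iff algebra_simps)

lemma inner_sym_outer: "sym_outer x y \<bullet> Y = x \<bullet> (Y *v y) + y \<bullet> (Y *v x)"
  unfolding inner_matrix_vector_mult inner_matrix
  by (simp add: sym_outer_def algebra_simps sum.distrib)

lemma sym_outer_in_sym_mats: "sym_outer x y \<in> sym_mats"
  by (simp add: sym_mats_def sym_outer_def vec_eq_iff transpose_def mult.commute)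

lemma sym_mats_decomposition:
  fixes A :: "real^'w^'w"
  assumes "A \<in> sym_mats"
  shows "A = (\<Sum>a\<in>UNIV. \<Sum>b\<in>UNIV. (A$a$b / 2) *\<^sub>R sym_outer (axis a 1) (axis b 1))"
proof -
  have entry: "((A$a$b / 2) *\<^sub>R sym_outer (axis a 1) (axis b 1)) $ p $ q
      = (if a = p then if b = q then A$p$q / 2 else 0 else 0)
        + (if a = q then if b = p then A$q$p / 2 else 0 else 0)" for a b p q
    by (simp add: sym_outer_def axis_def)
  have "transpose A = A"
    using assms by (simp add: sym_mats_def)
  note sym = transpose_eq_selfD[OF this]
  have entries: "(\<Sum>a\<in>UNIV. \<Sum>b\<in>UNIV. (A$a$b / 2) *\<^sub>R sym_outer (axis a 1) (axis b 1)) $ p $ q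
      = A$p$q / 2 + A$q$p / 2" for p q
    unfolding sum_component entry sum.distrib by (subst (1 2) sum.swap) simp
  have "A$p$q / 2 + A$q$p / 2 = A$p$q" for p q
    using sym[of q p] by simp
  with entries show ?thesis
    by (simp add: vec_eq_iff)
qed

section \<open>Normal cones and vertices\<close>

lemma subspace_sym_mats: "subspace (sym_mats :: (real^'w^'w) set)"
  unfolding subspace_def sym_mats_def by (auto simp: vec_eq_iff transpose_def)

lemma dim_less_dim_sym_mats_if_orthogonal:
  fixes D :: "real^'w^'w"
  assumes D: "D \<in> sym_mats" "D \<noteq> 0" and N: "N \<subseteq> sym_mats" "\<forall>c\<in>N. c \<bullet> D = 0"
  shows "dim N < dim (sym_mats :: (real^'w^'w) set)"
proof -
  define U where "U = {c \<in> (sym_mats :: (real^'w^'w) set). c \<bullet> D = 0}"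
  have "subspace U"
    using subspace_sym_mats unfolding U_def subspace_def by (auto simp: inner_add_left)
  then have span_U: "span U = U"
    by (simp add: span_eq_iff)
  have span_sym_mats: "span sym_mats = (sym_mats :: (real^'w^'w) set)"
    using subspace_sym_mats by (simp add: span_eq_iff)
  have "U \<subseteq> sym_mats" and "D \<notin> U"
    using D by (auto simp: U_def)
  then have "span U \<subset> span sym_mats"
    unfolding span_U span_sym_mats using D(1) by auto
  then have "dim U < dim (sym_mats :: (real^'w^'w) set)"
    by (rule dim_psubset)
  moreover have "dim N \<le> dim U"
    using N by (intro dim_subset) (auto simp: U_def)
  ultimately show ?thesis by simp
qed

text \<open>A normal vector \<open>c\<close> makes \<open>s \<mapsto> c \<bullet> Y(s)\<close> maximal at \<open>s = 0\<close> along a curve \<open>Y\<close> in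
  \<open>C\<close> through \<open>X\<close>, so by Fermat's rule \<open>c\<close> is orthogonal to the velocity \<open>D\<close>.\<close>
lemma not_is_vertex_if_curve:
  fixes X D F :: "real^'w^'w"
  assumes D: "D \<in> sym_mats" "D \<noteq> 0" and "e > 0"
    and curve: "\<And>s. \<bar>s\<bar> < e \<Longrightarrow> X + (s * sqrt (1 - s\<^sup>2)) *\<^sub>R D + s\<^sup>2 *\<^sub>R F \<in> C"
  shows "\<not> is_vertex C X"
proof
  assume vertex: "is_vertex C X"
  have "c \<bullet> D = 0" if c: "c \<in> normal_cone C X" for c
  proof (rule DERIV_local_max)
    let ?f = "\<lambda>s. c \<bullet> X + (s * sqrt (1 - s\<^sup>2)) * (c \<bullet> D) + s\<^sup>2 * (c \<bullet> F)"
    show "(?f has_real_derivative c \<bullet> D) (at 0)"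
      by (auto intro!: derivative_eq_intros)
    have "c \<bullet> (X + (s * sqrt (1 - s\<^sup>2)) *\<^sub>R D + s\<^sup>2 *\<^sub>R F) \<le> c \<bullet> X" if "\<bar>s\<bar> < e" for s
      using c curve[OF that] by (simp add: normal_cone_def)
    then show "\<forall>s. \<bar>0 - s\<bar> < e \<longrightarrow> ?f s \<le> ?f 0"
      by (simp add: inner_add_right)
  qed fact
  then have "dim (normal_cone C X) < dim (sym_mats :: (real^'w^'w) set)"
    by (intro dim_less_dim_sym_mats_if_orthogonal[OF D]) (auto simp: normal_cone_def)
  with vertex show False by (simp add: is_vertex_def)
qed

lemma is_vertex_if_span_normal_cone:
  fixes X :: "real^'w^'w"
  assumes "X \<in> C"
    and basis: "\<And>a b. sym_outer (axis a 1) (axis b 1) \<in> span (normal_cone C X)"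
  shows "is_vertex C X"
proof -
  have "sym_mats \<subseteq> span (normal_cone C X)"
  proof
    fix A :: "real^'w^'w"
    assume "A \<in> sym_mats"
    then have "A = (\<Sum>a\<in>UNIV. \<Sum>b\<in>UNIV. (A$a$b / 2) *\<^sub>R sym_outer (axis a 1) (axis b 1))"
      by (rule sym_mats_decomposition)
    also have "\<dots> \<in> span (normal_cone C X)"
      by (intro span_sum span_scale basis)
    finally show "A \<in> span (normal_cone C X)" .
  qed
  then have "dim (sym_mats :: (real^'w^'w) set) \<le> dim (normal_cone C X)"
    by (metis dim_subset dim_span)
  moreover have "dim (normal_cone C X) \<le> dim (sym_mats :: (real^'w^'w) set)"
    by (rule dim_subset) (auto simp: normal_cone_def)
  ultimately show ?thesis
    using assms(1) by (simp add: is_vertex_def)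
qed

lemma sym_outer_in_span_normal_cone_outer:
  fixes u :: "real^'w"
  assumes "\<forall>Y\<in>C. psd Y" and "x \<bullet> u = 0" and "y \<bullet> u = 0"
  shows "sym_outer x y \<in> span (normal_cone C (outer u))"
proof -
  have "- outer w \<in> normal_cone C (outer u)" if "w \<bullet> u = 0" for w
  proof -
    have "- outer w \<in> sym_mats"
      by (simp add: sym_mats_def outer_def vec_eq_iff transpose_def mult.commute)
    moreover have "- outer w \<bullet> Y \<le> 0" if "Y \<in> C" for Y
      using assms(1) that by (simp add: inner_outer psd_def)
    moreover have "- outer w \<bullet> outer u = 0"
      using \<open>w \<bullet> u = 0\<close> by (simp add: inner_outer outer_quadratic_form inner_commute)
    ultimately show ?thesis by (simp add: normal_cone_def)
  qed
  then have "outer w \<in> span (normal_cone C (outer u))" if "w \<bullet> u = 0" for w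
    using that span_neg[OF span_base] by fastforce
  then show ?thesis
    using assms(2,3) by (simp add: sym_outer_eq_outer inner_add_left span_diff)
qed

section \<open>The Schur complement of a matrix in \<open>TH_hat\<close>\<close>

type_synonym 'v hmat = "real^('v option)^('v option)"

lemma sum_UNIV_option:
  fixes f :: "'v::finite option \<Rightarrow> 'b::comm_monoid_add"
  shows "(\<Sum>a\<in>UNIV. f a) = f None + (\<Sum>i\<in>UNIV. f (Some i))"
  by (simp add: UNIV_option_conv sum.reindex)

lemma inner_matrix_vector_mult_option:
  fixes X :: "'v::finite hmat"
  shows "z \<bullet> (X *v y) = z$None * X$None$None * y$None
     + (\<Sum>j\<in>UNIV. z$None * X$None$Some j * y$Some j)
     + (\<Sum>i\<in>UNIV. z$Some i * X$Some i$None * y$None)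
     + (\<Sum>i\<in>UNIV. \<Sum>j\<in>UNIV. z$Some i * X$Some i$Some j * y$Some j)"
  by (simp add: inner_matrix_vector_mult sum_UNIV_option sum.distrib)

definition TH_base :: "'v::finite hmat \<Rightarrow> bool" where
  "TH_base X \<longleftrightarrow> psd X \<and> X$None$None = 1 \<and> (\<forall>i. X$Some i$Some i = X$None$Some i)"

lemma TH_baseD:
  assumes "TH_base X"
  shows "psd X" "transpose X = X" "X$None$None = 1" "X$Some i$Some i = X$None$Some i"
    "X$Some i$None = X$None$Some i"
  using assms transpose_eq_selfD[of X "Some i" None] by (auto simp: TH_base_def psd_def)

definition schur :: "'v::finite hmat \<Rightarrow> 'v \<Rightarrow> 'v \<Rightarrow> real" where
  "schur X i j = X$Some i$Some j - X$None$Some i * X$None$Some j"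

definition schur_form :: "'v::finite hmat \<Rightarrow> ('v \<Rightarrow> real) \<Rightarrow> ('v \<Rightarrow> real) \<Rightarrow> real" where
  "schur_form X w v = (\<Sum>i\<in>UNIV. \<Sum>j\<in>UNIV. w i * schur X i j * v j)"

definition schur_lift :: "'v::finite hmat \<Rightarrow> ('v \<Rightarrow> real) \<Rightarrow> real^('v option)" where
  "schur_lift X w =
    (\<chi> a. case a of None \<Rightarrow> - (\<Sum>i\<in>UNIV. X$None$Some i * w i) | Some i \<Rightarrow> w i)"

lemma schur_form_eq_schur_lift:
  fixes X :: "'v::finite hmat"
  assumes "transpose X = X" and "X$None$None = 1"
  shows "schur_form X w v = schur_lift X w \<bullet> (X *v schur_lift X v)"
proof -
  define a where "a = (\<Sum>i\<in>UNIV. X$None$Some i * w i)"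
  define b where "b = (\<Sum>i\<in>UNIV. X$None$Some i * v i)"
  have "a * b = (\<Sum>i\<in>UNIV. \<Sum>j\<in>UNIV. w i * (X$None$Some i * X$None$Some j) * v j)"
    unfolding a_def b_def sum_product by (simp add: mult_ac)
  then have "schur_form X w v = (\<Sum>i\<in>UNIV. \<Sum>j\<in>UNIV. w i * X$Some i$Some j * v j) - a * b"
    unfolding schur_form_def schur_def
    by (simp add: right_diff_distrib left_diff_distrib sum_subtractf)
  moreover have "(\<Sum>j\<in>UNIV. - a * X$None$Some j * v j) = - a * b"
    by (simp add: b_def sum_distrib_left mult_ac)
  moreover have "(\<Sum>i\<in>UNIV. w i * X$Some i$None * - b) = - a * b"
    using transpose_eq_selfD[OF assms(1)]
    by (simp add: a_def sum_distrib_left sum_negf mult_ac)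
  ultimately show ?thesis
    unfolding inner_matrix_vector_mult_option
    by (simp add: schur_lift_def assms(2) flip: a_def b_def)
qed

lemma schur_form_Cauchy_Schwarz:
  assumes "TH_base X"
  shows "(schur_form X w v)\<^sup>2 \<le> schur_form X w w * schur_form X v v"
  using psd_Cauchy_Schwarz[of X "schur_lift X w" "schur_lift X v"] TH_baseD[OF assms]
  by (simp add: schur_form_eq_schur_lift)

lemma schur_form_nonneg:
  assumes "TH_base X"
  shows "0 \<le> schur_form X w w"
  using TH_baseD[OF assms] by (simp add: schur_form_eq_schur_lift psd_def)

lemma schur_form_unit_right:
  "schur_form X w (\<lambda>j. of_bool (j = k)) = (\<Sum>i\<in>UNIV. w i * schur X i k)"
  by (simp add: schur_form_def)

lemma schur_form_units:
  "schur_form X (\<lambda>j. of_bool (j = i)) (\<lambda>j. of_bool (j = k)) = schur X i k"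
  by (simp add: schur_form_unit_right)

lemma schur_diag:
  assumes "TH_base X"
  shows "schur X i i = X$None$Some i * (1 - X$None$Some i)"
  using TH_baseD(4)[OF assms] by (simp add: schur_def algebra_simps)

lemma schur_diag_nonneg:
  assumes "TH_base X"
  shows "0 \<le> schur X i i"
  using schur_form_nonneg[OF assms] schur_form_units by metis

lemma schur_Cauchy_Schwarz:
  assumes "TH_base X"
  shows "(schur X i j)\<^sup>2 \<le> schur X i i * schur X j j"
  using schur_form_Cauchy_Schwarz[OF assms] schur_form_units by metis

lemma one_chi_None [simp]: "one_chi S $ None = 1"
  and one_chi_Some [simp]: "one_chi S $ Some i = of_bool (i \<in> S)"
  by (simp_all add: one_chi_def)

lemma TH_base_eq_outer_one_chi:
  assumes base: "TH_base X" and "\<forall>k. schur X k k = 0"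
  shows "X = outer (one_chi {i. X$None$Some i = 1})"
proof -
  have "X$None$Some i = 0 \<or> X$None$Some i = 1" for i
    using schur_diag[OF base, of i] assms(2) by simp
  then have top: "of_bool (X$None$Some i = 1) = X$None$Some i" for i
    by (metis of_bool_eq(1,2) zero_neq_one)
  have "(schur X i j)\<^sup>2 \<le> 0" for i j
    using schur_Cauchy_Schwarz[OF base, of i j] assms(2) by simp
  then have "X$Some i$Some j = X$None$Some i * X$None$Some j" for i j
    by (simp add: schur_def)
  then have "X $ a $ b = outer (one_chi {i. X$None$Some i = 1}) $ a $ b" for a b
    using TH_baseD(3,5)[OF base] by (cases a; cases b) (simp_all add: outer_def top)
  then show ?thesis
    unfolding vec_eq_iff by blast
qed

lemma two_le_rank_if_schur_nonzero:
  assumes base: "TH_base X" and "schur X k k \<noteq> 0"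
  shows "2 \<le> rank X"
proof (rule two_le_rank)
  show "X $ None \<noteq> 0"
  proof
    assume "X $ None = 0"
    then have "X $ None $ None = 0" by simp
    with TH_baseD(3)[OF base] show False by simp
  qed
  show "X $ Some k \<notin> span {X $ None}"
  proof
    assume "X $ Some k \<in> span {X $ None}"
    then obtain t where t: "X $ Some k = t *\<^sub>R X $ None"
      by (auto simp: span_singleton)
    then have "X$Some k$None = t" and "X$Some k$Some k = t * X$None$Some k"
      using TH_baseD(3)[OF base] by (simp_all add: vec_eq_iff)
    then have "schur X k k = 0"
      using TH_baseD(5)[OF base] by (simp add: schur_def)
    with assms(2) show False by simp
  qed
qed

section \<open>A curve through a matrix with a positive Schur complement entry\<close>

text \<open>In the Gram picture, with u the unit vector along the component of v_k orthogonal to v_0,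
  \<open>schur_dir X k i\<close> is <u, v_i>. \<open>rotated_top X k c s\<close> is the Gram matrix after v_0 is
  replaced by c v_0 + s u, and \<open>rescaling X k c s\<close> gives the factors that restore
  |v_i|^2 = <v_0, v_i>.\<close>

definition schur_dir :: "'v::finite hmat \<Rightarrow> 'v \<Rightarrow> 'v \<Rightarrow> real" where
  "schur_dir X k i = schur X i k / sqrt (schur X k k)"

definition schur_ratio :: "'v::finite hmat \<Rightarrow> 'v \<Rightarrow> 'v \<Rightarrow> real" where
  "schur_ratio X k i = (if X$None$Some i = 0 then 0 else schur_dir X k i / X$None$Some i)"

definition rotated_top :: "'v::finite hmat \<Rightarrow> 'v \<Rightarrow> real \<Rightarrow> real \<Rightarrow> 'v hmat" where
  "rotated_top X k c s = (\<chi> a b. case (a, b) of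
      (None, None) \<Rightarrow> 1
    | (None, Some j) \<Rightarrow> c * X$None$Some j + s * schur_dir X k j
    | (Some i, None) \<Rightarrow> c * X$None$Some i + s * schur_dir X k i
    | (Some i, Some j) \<Rightarrow> X$Some i$Some j)"

definition rescaling :: "'v::finite hmat \<Rightarrow> 'v \<Rightarrow> real \<Rightarrow> real \<Rightarrow> 'v option \<Rightarrow> real" where
  "rescaling X k c s a = (case a of None \<Rightarrow> 1 | Some i \<Rightarrow> c + s * schur_ratio X k i)"

definition TH_curve :: "'v::finite hmat \<Rightarrow> 'v \<Rightarrow> real \<Rightarrow> real \<Rightarrow> 'v hmat" where
  "TH_curve X k c s = diag_congruence (rescaling X k c s) (rotated_top X k c s)"

definition TH_curve_velocity :: "'v::finite hmat \<Rightarrow> 'v \<Rightarrow> 'v hmat" where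
  "TH_curve_velocity X k = (\<chi> a b. case (a, b) of
      (None, None) \<Rightarrow> 0
    | (None, Some j) \<Rightarrow> 2 * schur_dir X k j
    | (Some i, None) \<Rightarrow> 2 * schur_dir X k i
    | (Some i, Some j) \<Rightarrow> (schur_ratio X k i + schur_ratio X k j) * X$Some i$Some j)"

definition TH_curve_acceleration :: "'v::finite hmat \<Rightarrow> 'v \<Rightarrow> 'v hmat" where
  "TH_curve_acceleration X k = (\<chi> a b. case (a, b) of
      (None, None) \<Rightarrow> 0
    | (None, Some j) \<Rightarrow> schur_ratio X k j * schur_dir X k j - X$None$Some j
    | (Some i, None) \<Rightarrow> schur_ratio X k i * schur_dir X k i - X$None$Some i
    | (Some i, Some j) \<Rightarrow> (schur_ratio X k i * schur_ratio X k j - 1) * X$Some i$Some j)"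

lemma TH_curve_entries:
  "TH_curve X k c s $ Some i $ Some j
    = rescaling X k c s (Some i) * X$Some i$Some j * rescaling X k c s (Some j)"
  by (simp add: TH_curve_def diag_congruence_def rotated_top_def)

context
  fixes X :: "'v::finite hmat" and k :: 'v
  assumes base: "TH_base X" and schur_pos: "schur X k k > 0"
begin

lemma schur_dir_bound: "(\<Sum>i\<in>UNIV. w i * schur_dir X k i)\<^sup>2 \<le> schur_form X w w"
proof -
  define r where "r = sqrt (schur X k k)"
  have r: "r > 0" "r\<^sup>2 = schur X k k"
    using schur_pos by (simp_all add: r_def)
  have "schur_form X w (\<lambda>j. of_bool (j = k)) = r * (\<Sum>i\<in>UNIV. w i * schur_dir X k i)"
    using r by (simp add: schur_form_unit_right schur_dir_def sum_distrib_left flip: r_def)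
  then have "r\<^sup>2 * (\<Sum>i\<in>UNIV. w i * schur_dir X k i)\<^sup>2 \<le> r\<^sup>2 * schur_form X w w"
    using schur_form_Cauchy_Schwarz[OF base, of w "\<lambda>j. of_bool (j = k)"] r
    by (simp add: schur_form_units power_mult_distrib mult.commute)
  then show ?thesis
    using r(1) by (metis mult_le_cancel_left_pos zero_less_power)
qed

lemma schur_dir_eq: "schur_dir X k i = schur_ratio X k i * X$None$Some i"
proof (cases "X$None$Some i = 0")
  case True
  then have "schur X i i = 0"
    using schur_diag[OF base] by simp
  then have "(schur X i k)\<^sup>2 \<le> 0"
    using schur_Cauchy_Schwarz[OF base, of i k] by simp
  with True show ?thesis
    by (simp add: schur_dir_def schur_ratio_def)
qed (simp add: schur_ratio_def)

lemma schur_dir_self: "schur_dir X k k = sqrt (schur X k k)"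
  using schur_pos by (simp add: schur_dir_def real_div_sqrt)

lemma psd_rotated_top:
  assumes "c\<^sup>2 + s\<^sup>2 = 1"
  shows "psd (rotated_top X k c s)"
proof -
  have "transpose (rotated_top X k c s) = rotated_top X k c s"
    using transpose_eq_selfD[OF TH_baseD(2)[OF base]]
    by (auto simp: vec_eq_iff transpose_def rotated_top_def split: option.split)
  moreover have "0 \<le> z \<bullet> (rotated_top X k c s *v z)" for z
  proof -
    define w where "w i = z $ Some i" for i
    define a where "a = (\<Sum>i\<in>UNIV. X$None$Some i * w i)"
    define b where "b = (\<Sum>i\<in>UNIV. w i * schur_dir X k i)"
    define z0 where "z0 = z $ None"
    have "(\<Sum>i\<in>UNIV. \<Sum>j\<in>UNIV. w i * X$Some i$Some j * w j) = schur_form X w w + a\<^sup>2"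
      unfolding schur_form_def schur_def a_def power2_eq_square sum_product
      by (simp add: algebra_simps sum_subtractf)
    then have expand: "z \<bullet> (rotated_top X k c s *v z)
        = z0\<^sup>2 + 2 * z0 * (c * a + s * b) + schur_form X w w + a\<^sup>2"
      unfolding inner_matrix_vector_mult_option
      by (simp add: rotated_top_def a_def b_def w_def z0_def sum_distrib_left sum.distrib
          algebra_simps power2_eq_square)
    have "0 \<le> (z0 * c + a)\<^sup>2 + (z0 * s + b)\<^sup>2"
      by simp
    also have "\<dots> = z0\<^sup>2 * (c\<^sup>2 + s\<^sup>2) + 2 * z0 * (c * a + s * b) + a\<^sup>2 + b\<^sup>2"
      by (simp add: power2_eq_square algebra_simps)
    also have "\<dots> \<le> z0\<^sup>2 + 2 * z0 * (c * a + s * b) + schur_form X w w + a\<^sup>2"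
      using assms schur_dir_bound[of w] by (simp add: b_def)
    finally show ?thesis
      by (simp only: expand)
  qed
  ultimately show ?thesis by (simp add: psd_def)
qed

lemma TH_base_TH_curve:
  assumes "c\<^sup>2 + s\<^sup>2 = 1"
  shows "TH_base (TH_curve X k c s)"
proof -
  have "rescaling X k c s (Some i) * X$None$Some i = c * X$None$Some i + s * schur_dir X k i" for i
    by (simp add: rescaling_def schur_dir_eq algebra_simps)
  then show ?thesis
    using psd_diag_congruence[OF psd_rotated_top[OF assms]] TH_baseD(4)[OF base]
    by (simp add: TH_base_def TH_curve_def diag_congruence_def rotated_top_def rescaling_def mult_ac)
qed

lemma TH_curve_expansion:
  assumes "c\<^sup>2 + s\<^sup>2 = 1"
  shows "TH_curve X k c s = X + (s * c) *\<^sub>R TH_curve_velocity X k + s\<^sup>2 *\<^sub>R TH_curve_acceleration X k"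
proof -
  have cc: "c * (c * t) = t - s * (s * t)" for t
  proof -
    have "(c\<^sup>2 + s\<^sup>2) * t = t"
      using assms by simp
    then show ?thesis
      by (simp add: power2_eq_square algebra_simps)
  qed
  have "TH_curve X k c s $ a $ b
      = X $ a $ b + (s * c) * TH_curve_velocity X k $ a $ b + s\<^sup>2 * TH_curve_acceleration X k $ a $ b"
    for a b
    using TH_baseD[OF base] schur_dir_eq
    by (cases a; cases b)
      (simp_all add: TH_curve_def diag_congruence_def rotated_top_def rescaling_def
        TH_curve_velocity_def TH_curve_acceleration_def algebra_simps power2_eq_square cc)
  then show ?thesis
    by (simp add: vec_eq_iff)
qed

lemma TH_curve_velocity_sym: "TH_curve_velocity X k \<in> sym_mats"
  using transpose_eq_selfD[OF TH_baseD(2)[OF base]]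
  by (auto simp: sym_mats_def vec_eq_iff transpose_def TH_curve_velocity_def split: option.split)

lemma TH_curve_velocity_nonzero: "TH_curve_velocity X k \<noteq> 0"
proof
  assume "TH_curve_velocity X k = 0"
  then have "TH_curve_velocity X k $ None $ Some k = 0"
    by simp
  then show False
    using schur_pos by (simp add: TH_curve_velocity_def schur_dir_self)
qed

end

section \<open>Vertices of the theta bodies\<close>

lemma TH_base_if_in_TH_set:
  assumes "C \<in> {TH_hat E, TH_hat' E, TH_hat_plus E}" and "X \<in> C"
  shows "TH_base X"
  using assms by (auto simp: TH_base_def TH_hat_def TH_hat'_def TH_hat_plus_def)

lemma in_TH_set_if_positive_rescaling:
  assumes C: "C \<in> {TH_hat E, TH_hat' E, TH_hat_plus E}" and "X \<in> C" and "TH_base Y"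
    and scale: "\<And>i j. Y$Some i$Some j = p i j * X$Some i$Some j" and pos: "\<And>i j. p i j > 0"
  shows "Y \<in> C"
proof -
  have "Y$Some i$Some j = 0" if "X$Some i$Some j = 0" for i j
    using scale that by simp
  moreover have "0 \<le> Y$Some i$Some j" if "0 \<le> X$Some i$Some j" for i j
    using scale pos[of i j] that by simp
  moreover have "Y$Some i$Some j \<le> 0" if "X$Some i$Some j \<le> 0" for i j
    using scale mult_nonneg_nonpos[of "p i j" "X$Some i$Some j"] pos[of i j] that by simp
  ultimately show ?thesis
    using C assms(2,3) by (auto simp: TH_base_def TH_hat_def TH_hat'_def TH_hat_plus_def)
qed

lemma outer_one_chi_in_TH_set_iff:
  assumes "C \<in> {TH_hat E, TH_hat' E, TH_hat_plus E}"
  shows "outer (one_chi S) \<in> C \<longleftrightarrow> stable_set E S"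
proof -
  have entry: "outer (one_chi S) $ Some i $ Some j = (if i \<in> S \<and> j \<in> S then 1 else 0)" for i j
    by (simp add: outer_def)
  show ?thesis
  proof
    assume "outer (one_chi S) \<in> C"
    then have edge: "outer (one_chi S) $ Some i $ Some j \<le> 0" if "(i, j) \<in> E" for i j
      using assms that by (auto simp: TH_hat_def TH_hat'_def TH_hat_plus_def)
    show "stable_set E S"
      unfolding stable_set_def
    proof (intro ballI notI)
      fix i j
      assume "i \<in> S" "j \<in> S" "(i, j) \<in> E"
      with edge[of i j] entry[of i j] show False by simp
    qed
  next
    assume "stable_set E S"
    then show "outer (one_chi S) \<in> C"
      using assms psd_outer[of "one_chi S"] entry
      by (auto simp: TH_hat_def TH_hat'_def TH_hat_plus_def outer_def stable_set_def)
  qed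
qed

lemma not_is_vertex_if_schur_pos:
  assumes C: "C \<in> {TH_hat E, TH_hat' E, TH_hat_plus E}" and "X \<in> C" and pos: "schur X k k > 0"
  shows "\<not> is_vertex C X"
proof -
  have base: "TH_base X"
    using TH_base_if_in_TH_set[OF C \<open>X \<in> C\<close>] .
  define H where "H = (\<Sum>i\<in>UNIV. \<bar>schur_ratio X k i\<bar>)"
  define e where "e = 1 / (2 * (H + 1))"
  have "H \<ge> 0"
    by (simp add: H_def sum_nonneg)
  then have e: "e > 0" "e \<le> 1/2" "e * H < 1/2"
    by (simp_all add: e_def field_simps)
  show ?thesis
  proof (rule not_is_vertex_if_curve)
    show "TH_curve_velocity X k \<in> sym_mats" "TH_curve_velocity X k \<noteq> 0" "e > 0"
      using TH_curve_velocity_sym[OF base pos] TH_curve_velocity_nonzero[OF base pos] e by simp_all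
    fix s :: real
    assume "\<bar>s\<bar> < e"
    define c where "c = sqrt (1 - s\<^sup>2)"
    have "\<bar>s\<bar>\<^sup>2 \<le> (1/2)\<^sup>2"
      using \<open>\<bar>s\<bar> < e\<close> e(2) by (intro power_mono) simp_all
    then have "s\<^sup>2 \<le> 1/4"
      by (simp add: power_divide)
    then have cs: "c\<^sup>2 + s\<^sup>2 = 1"
      by (simp add: c_def)
    have "c \<ge> 1/2"
      unfolding c_def using \<open>s\<^sup>2 \<le> 1/4\<close> by (intro real_le_rsqrt) (simp add: power_divide)
    have small: "\<bar>s * schur_ratio X k i\<bar> < 1/2" for i
    proof -
      have "\<bar>schur_ratio X k i\<bar> \<le> H"
        unfolding H_def by (rule member_le_sum) simp_all
      then have "\<bar>s\<bar> * \<bar>schur_ratio X k i\<bar> \<le> e * H"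
        using \<open>\<bar>s\<bar> < e\<close> \<open>H \<ge> 0\<close> by (intro mult_mono) simp_all
      with e(3) show ?thesis
        by (simp add: abs_mult)
    qed
    have rescaling_pos: "rescaling X k c s (Some i) > 0" for i
      using \<open>c \<ge> 1/2\<close> small[of i] by (simp add: rescaling_def abs_less_iff)
    have "TH_curve X k c s \<in> C"
      by (rule in_TH_set_if_positive_rescaling[OF C \<open>X \<in> C\<close> TH_base_TH_curve[OF base pos cs],
            where p = "\<lambda>i j. rescaling X k c s (Some i) * rescaling X k c s (Some j)"])
        (simp_all add: TH_curve_entries rescaling_pos mult_ac)
    then show "X + (s * sqrt (1 - s\<^sup>2)) *\<^sub>R TH_curve_velocity X k + s\<^sup>2 *\<^sub>R TH_curve_acceleration X k \<in> C"
      using TH_curve_expansion[OF base pos cs] by (simp add: c_def mult.commute)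
  qed
qed

lemma is_vertex_outer_one_chi:
  fixes C :: "'v::finite hmat set"
  assumes TH: "\<forall>Y\<in>C. TH_base Y" and X: "outer (one_chi S) \<in> C"
  shows "is_vertex C (outer (one_chi S))"
proof (rule is_vertex_if_span_normal_cone[OF X])
  let ?L = "span (normal_cone C (outer (one_chi S)))"
  let ?e = "\<lambda>a. axis a 1 :: real^('v option)"
  define t where "t i = (of_bool (i \<in> S) :: real)" for i
  define v where "v i = ?e (Some i) - t i *\<^sub>R ?e None" for i
  have in_normal_cone: "c \<in> normal_cone C (outer (one_chi S))"
    if "c \<in> sym_mats" and "\<And>Y. Y \<in> C \<Longrightarrow> c \<bullet> Y = d" for c d
    using that X by (simp add: normal_cone_def)
  have vv: "sym_outer (v i) (v j) \<in> ?L" for i j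
    using TH by (intro sym_outer_in_span_normal_cone_outer)
      (auto simp: TH_base_def v_def t_def inner_diff_left inner_axis')
  have e00: "sym_outer (?e None) (?e None) \<in> ?L"
    using TH by (intro span_base in_normal_cone[where d = 2] sym_outer_in_sym_mats)
      (simp add: inner_sym_outer inner_axis_matrix_vector_mult_axis TH_base_def)
  have diag: "sym_outer (?e (Some i)) (?e (Some i)) - sym_outer (?e None) (?e (Some i)) \<in> ?L" for i
  proof (intro span_base in_normal_cone[where d = 0] subspace_diff[OF subspace_sym_mats]
      sym_outer_in_sym_mats)
    fix Y
    assume "Y \<in> C"
    then have "TH_base Y"
      using TH by blast
    then show "(sym_outer (?e (Some i)) (?e (Some i)) - sym_outer (?e None) (?e (Some i))) \<bullet> Y = 0"
      by (simp add: inner_diff_left inner_sym_outer inner_axis_matrix_vector_mult_axis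
          TH_baseD(4,5))
  qed
  have e0i: "sym_outer (?e None) (?e (Some i)) \<in> ?L" for i
  proof -
    have "(1 - 2 * t i) *\<^sub>R sym_outer (?e None) (?e (Some i))
        = sym_outer (v i) (v i) - (sym_outer (?e (Some i)) (?e (Some i)) - sym_outer (?e None) (?e (Some i)))
          - (t i)\<^sup>2 *\<^sub>R sym_outer (?e None) (?e None)"
      by (simp add: vec_eq_iff sym_outer_def v_def algebra_simps power2_eq_square)
    also have "\<dots> \<in> ?L"
      by (intro span_diff span_scale vv diag e00)
    finally have "(1 / (1 - 2 * t i)) *\<^sub>R ((1 - 2 * t i) *\<^sub>R sym_outer (?e None) (?e (Some i))) \<in> ?L"
      by (rule span_scale)
    moreover have "1 - 2 * t i \<noteq> 0"
      by (simp add: t_def)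
    ultimately show ?thesis
      by simp
  qed
  have eij: "sym_outer (?e (Some i)) (?e (Some j)) \<in> ?L" for i j
  proof -
    have "sym_outer (?e (Some i)) (?e (Some j))
        = sym_outer (v i) (v j) + t j *\<^sub>R sym_outer (?e None) (?e (Some i))
          + t i *\<^sub>R sym_outer (?e None) (?e (Some j)) - (t i * t j) *\<^sub>R sym_outer (?e None) (?e None)"
      by (simp add: vec_eq_iff sym_outer_def v_def algebra_simps)
    also have "\<dots> \<in> ?L"
      by (intro span_add span_diff span_scale vv e0i e00)
    finally show ?thesis .
  qed
  have "sym_outer (?e (Some i)) (?e None) \<in> ?L" for i
    using e0i sym_outer_commute by metis
  then show "sym_outer (?e a) (?e b) \<in> ?L" for a b
    using e00 e0i eij by (cases a; cases b) simp_all
qed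

lemma TH_set_vertex_cases:
  assumes C: "C \<in> {TH_hat E, TH_hat' E, TH_hat_plus E}" and "X \<in> C"
  obtains S where "X = outer (one_chi S)" "stable_set E S" "is_vertex C X" "rank X = 1"
  | "\<not> is_vertex C X" "rank X \<noteq> 1"
proof -
  have base: "TH_base X"
    using TH_base_if_in_TH_set[OF C \<open>X \<in> C\<close>] .
  show ?thesis
  proof (cases "\<forall>k. schur X k k = 0")
    case True
    define S where "S = {i. X$None$Some i = 1}"
    have X: "X = outer (one_chi S)"
      using TH_base_eq_outer_one_chi[OF base True] by (simp add: S_def)
    then have "stable_set E S"
      using outer_one_chi_in_TH_set_iff[OF C] \<open>X \<in> C\<close> by simp
    moreover have "is_vertex C X"
      using is_vertex_outer_one_chi[of C S] TH_base_if_in_TH_set[OF C] \<open>X \<in> C\<close> X by simp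
    moreover have "rank X = 1"
      using rank_outer[of "one_chi S" None] X by simp
    ultimately show ?thesis
      using X that(1) by blast
  next
    case False
    then obtain k where "schur X k k \<noteq> 0"
      by blast
    moreover have "schur X k k \<ge> 0"
      using schur_diag_nonneg[OF base] .
    ultimately have "\<not> is_vertex C X" and "2 \<le> rank X"
      using not_is_vertex_if_schur_pos[OF C \<open>X \<in> C\<close>, of k] two_le_rank_if_schur_nonzero[OF base]
      by simp_all
    then show ?thesis
      using that(2) by simp
  qed
qed

theorem corollary3p2:
  fixes E :: "('v::finite \<times> 'v) set"
    and C :: "(real^('v option)^('v option)) set"
  assumes "sym E" and "\<forall>i. (i, i) \<notin> E"
    and "C \<in> {TH_hat E, TH_hat' E, TH_hat_plus E}"
  shows "(\<forall>X\<in>C. is_vertex C X \<longleftrightarrow> rank X = 1)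
       \<and> {X. is_vertex C X} = {outer (one_chi S) | S. stable_set E S}"
proof
  show "\<forall>X\<in>C. is_vertex C X \<longleftrightarrow> rank X = 1"
    using TH_set_vertex_cases[OF assms(3)] by metis
  show "{X. is_vertex C X} = {outer (one_chi S) | S. stable_set E S}"
  proof (intro set_eqI iffI)
    fix X
    assume "X \<in> {X. is_vertex C X}"
    then have "is_vertex C X" and "X \<in> C"
      by (simp_all add: is_vertex_def)
    then show "X \<in> {outer (one_chi S) | S. stable_set E S}"
      by (cases rule: TH_set_vertex_cases[OF assms(3)]) auto
  next
    fix X
    assume "X \<in> {outer (one_chi S) | S. stable_set E S}"
    then show "X \<in> {X. is_vertex C X}"
      using outer_one_chi_in_TH_set_iff[OF assms(3)] is_vertex_outer_one_chi
        TH_base_if_in_TH_set[OF assms(3)] by auto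
  qed
qed

end
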